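(* Let $G$ be a graph, $k$ a positive integer, $T\subseteq V(G)$ and $v\in T$. Let $(H,\ell)=\mathcal{C}^c_k(G,T)$. Construct a labeled graph $(H',\ell')$ as follows: for every node $x$ of $H$ set $\ell'(x)=\ell(x)|_{T\setminus\{v\}}$; then iteratively contract every edge between two nodes $x,y$ with $\ell'(x)=\ell'(y)$, assigning label $\ell'(z):=\ell'(x)$ to the resulting node $z$. Then $(H',\ell')=\mathcal{C}^c_k(G,T\setminus\{v\})$. Moreover, given any certificate $S$ for $(H,\ell)$, there is a certificate $S'$ for $(H',\ell')$ such that for every $k$-coloring $\gamma$ of $G$, the $\gamma$-node of $H'$ with respect to $S'$ is the node resulting from contracting the set of nodes that contains the $\gamma$-node of $H$ with respect to $S$.
   Context: A $k$-coloring of $G$ is a map $\alpha:V(G)\to\{1,\dots,k\}$ with $\alpha(u)\ne\alpha(v)$ for all edges $uv$. $\mathcal{C}_k(G)$ has the $k$-colorings as nodes, adjacent iff they differ on exactly one vertex. For $T\subseteq V(G)$, label each coloring $\gamma$ by $\gamma|_T$. A label component is a maximal set of colorings with the same label inducing a connected subgraph of $\mathcal{C}_k(G)$. The contracted solution graph $\mathcal{C}^c_k(G,T)=(H,\ell)$ has one node $x$ per label component $S_x$, distinct $x,y$ adjacent iff some $\gamma\in S_x,\gamma'\in S_y$ are adjacent in $\mathcal{C}_k(G)$, and $\ell(x)$ the common label on $S_x$; labeled graphs are identified up to label-preserving isomorphism. Contracting an edge $uv$ replaces $u,v$ by a new vertex adjacent to all former neighbors of $u$ or $v$ (no loops or multi-edges).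 A certificate for $(H,\ell)$ is an assignment of nonempty sets $S_x$ of $k$-colorings of $G$ to the nodes $x$ such that: the $S_x$ partition the $k$-colorings of $G$; $\gamma|_T=\ell(x)$ for $\gamma\in S_x$; adjacent nodes have distinct labels; each $S_x$ induces a connected subgraph of $\mathcal{C}_k(G)$; distinct $x,y$ are adjacent iff some $\gamma\in S_x$ and $\gamma'\in S_y$ are adjacent in $\mathcal{C}_k(G)$. The $\gamma$-node with respect to a certificate $S$ is the node $x$ with $\gamma\in S_x$. *)

theory Defs
  imports Main
begin

definition simple_graph :: "'v set \<Rightarrow> ('v \<Rightarrow> 'v \<Rightarrow> bool) \<Rightarrow> bool" where
  "simple_graph V E \<longleftrightarrow> finite V \<and> (\<forall>u w. E u w \<longrightarrow> E w u) \<and> (\<forall>u. \<not> E u u)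
     \<and> (\<forall>u w. E u w \<longrightarrow> u \<in> V \<and> w \<in> V)"

text \<open>k-colourings of G, as maps V -> {1..k}; extended by 0 outside V so that they are
  uniquely represented.\<close>
definition colorings :: "'v set \<Rightarrow> ('v \<Rightarrow> 'v \<Rightarrow> bool) \<Rightarrow> nat \<Rightarrow> ('v \<Rightarrow> nat) set" where
  "colorings V E k = {\<alpha>. (\<forall>u\<in>V. \<alpha> u \<in> {1..k}) \<and> (\<forall>u. u \<notin> V \<longrightarrow> \<alpha> u = 0)
      \<and> (\<forall>u\<in>V. \<forall>w\<in>V. E u w \<longrightarrow> \<alpha> u \<noteq> \<alpha> w)}"

definition recol_adj :: "('v \<Rightarrow> nat) \<Rightarrow> ('v \<Rightarrow> nat) \<Rightarrow> bool" where
  "recol_adj \<alpha> \<beta> \<longleftrightarrow> card {u. \<alpha> u \<noteq> \<beta> u} = 1"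

definition lab :: "'v set \<Rightarrow> ('v \<Rightarrow> nat) \<Rightarrow> ('v \<Rightarrow> nat)" where
  "lab T \<gamma> = (\<lambda>u. if u \<in> T then \<gamma> u else 0)"

definition induces_connected :: "('v \<Rightarrow> nat) set \<Rightarrow> bool" where
  "induces_connected S \<longleftrightarrow>
     (\<forall>\<alpha>\<in>S. \<forall>\<beta>\<in>S. (\<lambda>x y. x \<in> S \<and> y \<in> S \<and> recol_adj x y)\<^sup>*\<^sup>* \<alpha> \<beta>)"

definition same_label :: "'v set \<Rightarrow> ('v \<Rightarrow> nat) set \<Rightarrow> bool" where
  "same_label T S \<longleftrightarrow> (\<forall>\<alpha>\<in>S. \<forall>\<beta>\<in>S. lab T \<alpha> = lab T \<beta>)"

definition label_component ::
  "'v set \<Rightarrow> ('v \<Rightarrow> 'v \<Rightarrow> bool) \<Rightarrow> nat \<Rightarrow> 'v set \<Rightarrow> ('v \<Rightarrow> nat) set \<Rightarrow> bool" where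
  "label_component V E k T S \<longleftrightarrow>
     S \<noteq> {} \<and> S \<subseteq> colorings V E k \<and> same_label T S \<and> induces_connected S \<and>
     (\<forall>S'. S \<subseteq> S' \<and> S' \<subseteq> colorings V E k \<and> same_label T S' \<and> induces_connected S'
        \<longrightarrow> S' = S)"

definition csg_nodes ::
  "'v set \<Rightarrow> ('v \<Rightarrow> 'v \<Rightarrow> bool) \<Rightarrow> nat \<Rightarrow> 'v set \<Rightarrow> ('v \<Rightarrow> nat) set set" where
  "csg_nodes V E k T = {S. label_component V E k T S}"

definition csg_adj :: "('v \<Rightarrow> nat) set \<Rightarrow> ('v \<Rightarrow> nat) set \<Rightarrow> bool" where
  "csg_adj X Y \<longleftrightarrow> X \<noteq> Y \<and> (\<exists>\<gamma>\<in>X. \<exists>\<gamma>'\<in>Y. recol_adj \<gamma> \<gamma>')"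

definition csg_label :: "'v set \<Rightarrow> ('v \<Rightarrow> nat) set \<Rightarrow> ('v \<Rightarrow> nat)" where
  "csg_label T X = lab T (SOME \<gamma>. \<gamma> \<in> X)"

definition lg_iso ::
  "'a set \<Rightarrow> ('a \<Rightarrow> 'a \<Rightarrow> bool) \<Rightarrow> ('a \<Rightarrow> 'l) \<Rightarrow> 'b set \<Rightarrow> ('b \<Rightarrow> 'b \<Rightarrow> bool) \<Rightarrow> ('b \<Rightarrow> 'l) \<Rightarrow> bool"
  where
  "lg_iso N1 A1 L1 N2 A2 L2 \<longleftrightarrow>
     (\<exists>f. bij_betw f N1 N2 \<and> (\<forall>x\<in>N1. \<forall>y\<in>N1. A1 x y \<longleftrightarrow> A2 (f x) (f y))
          \<and> (\<forall>x\<in>N1. L1 x = L2 (f x)))"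

definition is_csg ::
  "'v set \<Rightarrow> ('v \<Rightarrow> 'v \<Rightarrow> bool) \<Rightarrow> nat \<Rightarrow> 'v set \<Rightarrow>
   'a set \<Rightarrow> ('a \<Rightarrow> 'a \<Rightarrow> bool) \<Rightarrow> ('a \<Rightarrow> ('v \<Rightarrow> nat)) \<Rightarrow> bool" where
  "is_csg V E k T N A L \<longleftrightarrow> lg_iso N A L (csg_nodes V E k T) csg_adj (csg_label T)"

definition certificate ::
  "'v set \<Rightarrow> ('v \<Rightarrow> 'v \<Rightarrow> bool) \<Rightarrow> nat \<Rightarrow> 'v set \<Rightarrow>
   'a set \<Rightarrow> ('a \<Rightarrow> 'a \<Rightarrow> bool) \<Rightarrow> ('a \<Rightarrow> ('v \<Rightarrow> nat)) \<Rightarrow> ('a \<Rightarrow> ('v \<Rightarrow> nat) set) \<Rightarrow> bool" where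
  "certificate V E k T N A L S \<longleftrightarrow>
     (\<forall>x\<in>N. S x \<noteq> {}) \<and>
     (\<Union>x\<in>N. S x) = colorings V E k \<and>
     (\<forall>x\<in>N. \<forall>y\<in>N. x \<noteq> y \<longrightarrow> S x \<inter> S y = {}) \<and>
     (\<forall>x\<in>N. \<forall>\<gamma>\<in>S x. lab T \<gamma> = L x) \<and>
     (\<forall>x\<in>N. \<forall>y\<in>N. A x y \<longrightarrow> L x \<noteq> L y) \<and>
     (\<forall>x\<in>N. induces_connected (S x)) \<and>
     (\<forall>x\<in>N. \<forall>y\<in>N. x \<noteq> y \<longrightarrow> (A x y \<longleftrightarrow> (\<exists>\<gamma>\<in>S x. \<exists>\<gamma>'\<in>S y. recol_adj \<gamma> \<gamma>')))"

text \<open>Nodes produced by contraction are represented by the set of original nodes of H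
  they were obtained from.\<close>
inductive contract_step ::
  "('n set set \<times> ('n set \<Rightarrow> 'n set \<Rightarrow> bool) \<times> ('n set \<Rightarrow> 'l)) \<Rightarrow>
   ('n set set \<times> ('n set \<Rightarrow> 'n set \<Rightarrow> bool) \<times> ('n set \<Rightarrow> 'l)) \<Rightarrow> bool" where
  "\<lbrakk> X \<in> N; Y \<in> N; X \<noteq> Y; A X Y; L X = L Y;
     N' = insert (X \<union> Y) (N - {X, Y});
     A' = (\<lambda>P Q. P \<in> N' \<and> Q \<in> N' \<and> P \<noteq> Q \<and>
            (if P = X \<union> Y then A X Q \<or> A Y Q
             else if Q = X \<union> Y then A P X \<or> A P Y
             else A P Q));
     L' = L(X \<union> Y := L X) \<rbrakk>
   \<Longrightarrow> contract_step (N, A, L) (N', A', L')"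

end

theory Submission
  imports Defs "HOL-Library.Disjoint_Sets"
begin

text \<open>Every certificate of the contracted solution graph consists of exactly its label
  components, and conversely the label components form a certificate; so it suffices to turn
  a certificate S of (H, l) into one of (H', l'). Give each node of H' the union of the parts
  S x of the nodes x of H it was contracted from. Contracting an edge between equally labelled
  nodes merges two connected sets joined by a recolouring step into a connected set with one
  label restricted to T - {v}, so these unions stay connected, equally labelled and adjacent
  exactly when some of their colourings are. When no edge joins equally labelled nodes any
  more, a recolouring step leaving a union leads into one with a different label, so the
  unions are maximal and form a certificate for T - {v}. Nothing about G, k or v beyond
  T - {v} \<subseteq> T is needed.\<close>

definition recol_within :: "('v \<Rightarrow> nat) set \<Rightarrow> ('v \<Rightarrow> nat) \<Rightarrow> ('v \<Rightarrow> nat) \<Rightarrow> bool" where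
  "recol_within S \<alpha> \<beta> \<longleftrightarrow> \<alpha> \<in> S \<and> \<beta> \<in> S \<and> recol_adj \<alpha> \<beta>"

lemma induces_connected_iff:
  "induces_connected S \<longleftrightarrow> (\<forall>\<alpha>\<in>S. \<forall>\<beta>\<in>S. (recol_within S)\<^sup>*\<^sup>* \<alpha> \<beta>)"
  unfolding induces_connected_def recol_within_def by simp

lemma recol_adj_sym: "recol_adj \<alpha> \<beta> \<Longrightarrow> recol_adj \<beta> \<alpha>"
  unfolding recol_adj_def by (simp add: eq_commute)

lemma symp_recol_within: "symp (recol_within S)"
  by (auto intro: sympI simp: recol_within_def recol_adj_sym)

lemma recol_within_rtranclp_mono:
  "S \<subseteq> S' \<Longrightarrow> (recol_within S)\<^sup>*\<^sup>* \<alpha> \<beta> \<Longrightarrow> (recol_within S')\<^sup>*\<^sup>* \<alpha> \<beta>"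
  by (rule rtranclp_mono[THEN predicate2D, rotated]) (auto simp: recol_within_def)

lemma induces_connected_Un:
  assumes "induces_connected A" "induces_connected B"
    and "\<alpha> \<in> A" "\<beta> \<in> B" "\<alpha> = \<beta> \<or> recol_adj \<alpha> \<beta>"
  shows "induces_connected (A \<union> B)"
proof -
  let ?R = "(recol_within (A \<union> B))\<^sup>*\<^sup>*"
  have in_A: "?R \<alpha>' \<beta>'" if "\<alpha>' \<in> A" "\<beta>' \<in> A" for \<alpha>' \<beta>'
    using assms(1) that recol_within_rtranclp_mono[of A] unfolding induces_connected_iff by blast
  have in_B: "?R \<alpha>' \<beta>'" if "\<alpha>' \<in> B" "\<beta>' \<in> B" for \<alpha>' \<beta>'
    using assms(2) that recol_within_rtranclp_mono[of B] unfolding induces_connected_iff by blast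
  have "?R \<alpha> \<beta>"
    using assms(3-5) by (auto simp: recol_within_def)
  then have bridge: "?R \<alpha> \<beta>" "?R \<beta> \<alpha>"
    using sympD[OF symp_rtranclp[OF symp_recol_within]] by blast+
  have "?R \<alpha>' \<alpha> \<and> ?R \<alpha> \<alpha>'" if "\<alpha>' \<in> A \<union> B" for \<alpha>'
    using that in_A[of \<alpha>' \<alpha>] in_A[of \<alpha> \<alpha>'] in_B[of \<alpha>' \<beta>] in_B[of \<beta> \<alpha>'] bridge assms(3,4)
    by (blast intro: rtranclp_trans)
  then show ?thesis
    unfolding induces_connected_iff by (blast intro: rtranclp_trans)
qed

lemma induces_connected_subset_closed:
  assumes "induces_connected S" "\<alpha> \<in> S" "\<alpha> \<in> K"
    and closed: "\<And>\<beta> \<beta>'. \<beta> \<in> K \<Longrightarrow> recol_within S \<beta> \<beta>' \<Longrightarrow> \<beta>' \<in> K"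
  shows "S \<subseteq> K"
proof
  fix \<beta> assume "\<beta> \<in> S"
  with assms(1,2) have "(recol_within S)\<^sup>*\<^sup>* \<alpha> \<beta>"
    unfolding induces_connected_iff by blast
  then show "\<beta> \<in> K"
    by (induction rule: rtranclp_induct) (use assms(3) closed in blast)+
qed

lemma same_labelD: "same_label T S \<Longrightarrow> \<alpha> \<in> S \<Longrightarrow> \<beta> \<in> S \<Longrightarrow> lab T \<alpha> = lab T \<beta>"
  unfolding same_label_def by blast

lemma label_componentD:
  assumes "label_component V E k T K"
  shows "K \<noteq> {}" and "K \<subseteq> colorings V E k" and "same_label T K"
    and "induces_connected K"
    and "\<And>S. K \<subseteq> S \<Longrightarrow> S \<subseteq> colorings V E k \<Longrightarrow> same_label T S \<Longrightarrow> induces_connected S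
      \<Longrightarrow> S = K"
  using assms unfolding label_component_def by blast+

lemma label_component_eqI:
  assumes K1: "label_component V E k T K1" and K2: "label_component V E k T K2"
    and "\<gamma> \<in> K1" "\<gamma>' \<in> K2" "\<gamma> = \<gamma>' \<or> recol_adj \<gamma> \<gamma>'" "lab T \<gamma> = lab T \<gamma>'"
  shows "K1 = K2"
proof -
  have "induces_connected (K1 \<union> K2)"
    by (rule induces_connected_Un[OF label_componentD(4)[OF K1] label_componentD(4)[OF K2] assms(3-5)])
  moreover have "lab T \<beta> = lab T \<gamma>" if "\<beta> \<in> K1 \<union> K2" for \<beta>
    using that
  proof
    assume "\<beta> \<in> K1"
    then show ?thesis by (rule same_labelD[OF label_componentD(3)[OF K1] _ assms(3)])
  next
    assume "\<beta> \<in> K2"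
    then show ?thesis using same_labelD[OF label_componentD(3)[OF K2] _ assms(4)] assms(6) by simp
  qed
  then have "same_label T (K1 \<union> K2)"
    unfolding same_label_def by simp
  moreover have "K1 \<union> K2 \<subseteq> colorings V E k"
    using label_componentD(2)[OF K1] label_componentD(2)[OF K2] by blast
  ultimately show ?thesis
    using label_componentD(5)[OF K1, of "K1 \<union> K2"] label_componentD(5)[OF K2, of "K1 \<union> K2"]
    by blast
qed

lemma induces_connected_reachable:
  "induces_connected {\<beta>. (recol_within S)\<^sup>*\<^sup>* \<gamma> \<beta>}" (is "induces_connected ?K")
proof -
  have reach_within: "(recol_within ?K)\<^sup>*\<^sup>* \<gamma> \<beta>" if "(recol_within S)\<^sup>*\<^sup>* \<gamma> \<beta>" for \<beta>
    using that
  proof (induction rule: rtranclp_induct)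
    case (step \<beta> \<beta>')
    have "\<beta> \<in> ?K" "\<beta>' \<in> ?K"
      using step.hyps rtranclp.rtrancl_into_rtrancl[of _ \<gamma> \<beta> \<beta>'] by simp_all
    with step.hyps(2) have "recol_within ?K \<beta> \<beta>'" unfolding recol_within_def by blast
    with step.IH show ?case by simp
  qed simp
  show ?thesis
    unfolding induces_connected_iff
  proof (intro ballI)
    fix \<alpha> \<beta> assume "\<alpha> \<in> ?K" "\<beta> \<in> ?K"
    then have "(recol_within ?K)\<^sup>*\<^sup>* \<alpha> \<gamma>" "(recol_within ?K)\<^sup>*\<^sup>* \<gamma> \<beta>"
      using reach_within sympD[OF symp_rtranclp[OF symp_recol_within]] by auto
    then show "(recol_within ?K)\<^sup>*\<^sup>* \<alpha> \<beta>" by (rule rtranclp_trans)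
  qed
qed

text \<open>The label component of a colouring is the set of colourings reachable from it by
  recolouring steps that keep its label.\<close>
lemma label_component_exists:
  assumes "\<gamma> \<in> colorings V E k"
  obtains K where "label_component V E k T K" "\<gamma> \<in> K"
proof
  define Same where "Same = {\<beta> \<in> colorings V E k. lab T \<beta> = lab T \<gamma>}"
  define K where "K = {\<beta>. (recol_within Same)\<^sup>*\<^sup>* \<gamma> \<beta>}"
  show "\<gamma> \<in> K" unfolding K_def by simp
  have "\<beta> \<in> Same" if "(recol_within Same)\<^sup>*\<^sup>* \<gamma> \<beta>" for \<beta>
    using that by (induction rule: rtranclp_induct) (auto simp: Same_def assms recol_within_def)
  then have "K \<subseteq> Same" unfolding K_def by blast
  moreover have "induces_connected K"
    unfolding K_def by (rule induces_connected_reachable)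
  moreover have "same_label T K"
    unfolding same_label_def
  proof (intro ballI)
    fix \<alpha> \<beta> assume "\<alpha> \<in> K" "\<beta> \<in> K"
    with \<open>K \<subseteq> Same\<close> have "lab T \<alpha> = lab T \<gamma>" "lab T \<beta> = lab T \<gamma>"
      unfolding Same_def by blast+
    then show "lab T \<alpha> = lab T \<beta>" by (rule trans[OF _ sym])
  qed
  moreover have "S = K"
    if "K \<subseteq> S" "S \<subseteq> colorings V E k" "same_label T S" "induces_connected S" for S
  proof -
    have "\<gamma> \<in> S" using \<open>\<gamma> \<in> K\<close> \<open>K \<subseteq> S\<close> by blast
    have "\<beta>' \<in> K" if "\<beta> \<in> K" "recol_within S \<beta> \<beta>'" for \<beta> \<beta>'
    proof -
      have "\<beta> \<in> S" "\<beta>' \<in> S" "recol_adj \<beta> \<beta>'" using that(2) unfolding recol_within_def by simp_all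
      moreover have "lab T \<beta> = lab T \<gamma>" "lab T \<beta>' = lab T \<gamma>"
        using same_labelD[OF \<open>same_label T S\<close> _ \<open>\<gamma> \<in> S\<close>] \<open>\<beta> \<in> S\<close> \<open>\<beta>' \<in> S\<close> by blast+
      ultimately have "recol_within Same \<beta> \<beta>'"
        using \<open>S \<subseteq> colorings V E k\<close> unfolding Same_def recol_within_def by blast
      with \<open>\<beta> \<in> K\<close> show "\<beta>' \<in> K" unfolding K_def by (simp add: rtranclp.rtrancl_into_rtrancl)
    qed
    then have "S \<subseteq> K"
      by (rule induces_connected_subset_closed[OF \<open>induces_connected S\<close> \<open>\<gamma> \<in> S\<close> \<open>\<gamma> \<in> K\<close>])
    with \<open>K \<subseteq> S\<close> show ?thesis by blast
  qed
  ultimately show "label_component V E k T K"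
    using \<open>\<gamma> \<in> K\<close> unfolding label_component_def Same_def by blast
qed

lemma certificateD:
  assumes "certificate V E k T N A L S"
  shows "\<And>x. x \<in> N \<Longrightarrow> S x \<noteq> {}"
    and "(\<Union>x\<in>N. S x) = colorings V E k"
    and "\<And>x y. x \<in> N \<Longrightarrow> y \<in> N \<Longrightarrow> x \<noteq> y \<Longrightarrow> S x \<inter> S y = {}"
    and "\<And>x \<gamma>. x \<in> N \<Longrightarrow> \<gamma> \<in> S x \<Longrightarrow> lab T \<gamma> = L x"
    and "\<And>x y. x \<in> N \<Longrightarrow> y \<in> N \<Longrightarrow> A x y \<Longrightarrow> L x \<noteq> L y"
    and "\<And>x. x \<in> N \<Longrightarrow> induces_connected (S x)"
    and "\<And>x y. x \<in> N \<Longrightarrow> y \<in> N \<Longrightarrow> x \<noteq> y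
      \<Longrightarrow> A x y \<longleftrightarrow> (\<exists>\<gamma>\<in>S x. \<exists>\<gamma>'\<in>S y. recol_adj \<gamma> \<gamma>')"
  using assms unfolding certificate_def by (elim conjE; blast)+

lemma csg_label_eq:
  assumes "label_component V E k T K" "\<gamma> \<in> K"
  shows "csg_label T K = lab T \<gamma>"
  unfolding csg_label_def
  using same_labelD[OF label_componentD(3)[OF assms(1)] someI[of "\<lambda>\<beta>. \<beta> \<in> K", OF assms(2)] assms(2)] .

lemma csg_adj_label_neq:
  assumes "label_component V E k T K1" "label_component V E k T K2" "csg_adj K1 K2"
  shows "csg_label T K1 \<noteq> csg_label T K2"
proof
  obtain \<gamma> \<gamma>' where "K1 \<noteq> K2" "\<gamma> \<in> K1" "\<gamma>' \<in> K2" "recol_adj \<gamma> \<gamma>'"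
    using assms(3) unfolding csg_adj_def by blast
  moreover assume "csg_label T K1 = csg_label T K2"
  ultimately show False
    using label_component_eqI[OF assms(1,2)] csg_label_eq[OF assms(1)] csg_label_eq[OF assms(2)]
    by metis
qed

lemma csg_certificate:
  "certificate V E k T (csg_nodes V E k T) csg_adj (csg_label T) (\<lambda>K. K)"
proof -
  let ?N = "csg_nodes V E k T"
  have lc: "label_component V E k T K" if "K \<in> ?N" for K
    using that unfolding csg_nodes_def by simp
  have "\<forall>K\<in>?N. K \<noteq> {}" using label_componentD(1)[OF lc] by blast
  moreover have "(\<Union>K\<in>?N. K) = colorings V E k"
    using label_componentD(2)[OF lc] label_component_exists[of _ V E k T]
    unfolding csg_nodes_def by blast
  moreover have "\<forall>K1\<in>?N. \<forall>K2\<in>?N. K1 \<noteq> K2 \<longrightarrow> K1 \<inter> K2 = {}"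
    using label_component_eqI[OF lc lc] by blast
  moreover have "\<forall>K\<in>?N. \<forall>\<gamma>\<in>K. lab T \<gamma> = csg_label T K"
    by (auto intro: csg_label_eq[OF lc, symmetric])
  moreover have "\<forall>K1\<in>?N. \<forall>K2\<in>?N. csg_adj K1 K2 \<longrightarrow> csg_label T K1 \<noteq> csg_label T K2"
    using csg_adj_label_neq[OF lc lc] by blast
  moreover have "\<forall>K\<in>?N. induces_connected K" using label_componentD(4)[OF lc] by blast
  moreover have "\<forall>K1\<in>?N. \<forall>K2\<in>?N. K1 \<noteq> K2 \<longrightarrow> csg_adj K1 K2 \<longleftrightarrow> (\<exists>\<gamma>\<in>K1. \<exists>\<gamma>'\<in>K2. recol_adj \<gamma> \<gamma>')"
    unfolding csg_adj_def by blast
  ultimately show ?thesis unfolding certificate_def by simp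
qed

lemma certificate_lg_iso:
  assumes "lg_iso N1 A1 L1 N2 A2 L2" and cert: "certificate V E k T N2 A2 L2 S"
  shows "\<exists>S'. certificate V E k T N1 A1 L1 S'"
proof -
  obtain f where f: "bij_betw f N1 N2"
    and adj: "\<forall>x\<in>N1. \<forall>y\<in>N1. A1 x y \<longleftrightarrow> A2 (f x) (f y)"
    and lab: "\<forall>x\<in>N1. L1 x = L2 (f x)"
    using assms(1) unfolding lg_iso_def by blast
  have img: "f ` N1 = N2" and inj: "\<And>x y. x \<in> N1 \<Longrightarrow> y \<in> N1 \<Longrightarrow> x \<noteq> y \<Longrightarrow> f x \<noteq> f y"
    using f unfolding bij_betw_def inj_on_def by blast+
  have fN: "f x \<in> N2" if "x \<in> N1" for x using img that by blast
  note part = certificateD[OF cert]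
  have "certificate V E k T N1 A1 L1 (\<lambda>x. S (f x))"
    unfolding certificate_def
  proof (intro conjI)
    have "(\<Union>x\<in>N1. S (f x)) = (\<Union>y\<in>N2. S y)" using img by blast
    then show "(\<Union>x\<in>N1. S (f x)) = colorings V E k" using part(2) by simp
    show "\<forall>x\<in>N1. S (f x) \<noteq> {}" using part(1) fN by blast
    show "\<forall>x\<in>N1. \<forall>y\<in>N1. x \<noteq> y \<longrightarrow> S (f x) \<inter> S (f y) = {}" using part(3) fN inj by blast
    show "\<forall>x\<in>N1. \<forall>\<gamma>\<in>S (f x). lab T \<gamma> = L1 x" using part(4) fN lab by simp
    show "\<forall>x\<in>N1. \<forall>y\<in>N1. A1 x y \<longrightarrow> L1 x \<noteq> L1 y" using part(5) fN adj lab by simp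
    show "\<forall>x\<in>N1. induces_connected (S (f x))" using part(6) fN by blast
    show "\<forall>x\<in>N1. \<forall>y\<in>N1. x \<noteq> y \<longrightarrow> A1 x y \<longleftrightarrow> (\<exists>\<gamma>\<in>S (f x). \<exists>\<gamma>'\<in>S (f y). recol_adj \<gamma> \<gamma>')"
      using part(7) fN inj adj by simp
  qed
  then show ?thesis by blast
qed

lemma is_csg_imp_certificate:
  "is_csg V E k T N A L \<Longrightarrow> \<exists>S. certificate V E k T N A L S"
  unfolding is_csg_def using certificate_lg_iso csg_certificate by blast

text \<open>A part can only be left by a recolouring step into an adjacent part, which carries another label.\<close>
lemma certificate_part_maximal:
  assumes cert: "certificate V E k T N A L S" and "x \<in> N"
    and "S x \<subseteq> S'" "S' \<subseteq> colorings V E k" "same_label T S'" "induces_connected S'"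
  shows "S' = S x"
proof -
  obtain \<alpha> where "\<alpha> \<in> S x" using certificateD(1)[OF cert \<open>x \<in> N\<close>] by blast
  have "\<beta>' \<in> S x" if "\<beta> \<in> S x" "recol_within S' \<beta> \<beta>'" for \<beta> \<beta>'
  proof (rule ccontr)
    assume "\<beta>' \<notin> S x"
    have "\<beta> \<in> S'" "\<beta>' \<in> S'" "recol_adj \<beta> \<beta>'" using that(2) unfolding recol_within_def by simp_all
    then obtain y where "y \<in> N" "\<beta>' \<in> S y"
      using certificateD(2)[OF cert] \<open>S' \<subseteq> colorings V E k\<close> by blast
    with \<open>\<beta>' \<notin> S x\<close> have "A x y"
      using certificateD(7)[OF cert \<open>x \<in> N\<close>] that(1) \<open>recol_adj \<beta> \<beta>'\<close> by blast
    then have "L x \<noteq> L y" using certificateD(5)[OF cert \<open>x \<in> N\<close> \<open>y \<in> N\<close>] by blast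
    moreover have "L x = lab T \<beta>" "lab T \<beta>' = L y"
      using certificateD(4)[OF cert] \<open>x \<in> N\<close> \<open>y \<in> N\<close> that(1) \<open>\<beta>' \<in> S y\<close> by simp_all
    then have "L x = L y"
      using same_labelD[OF \<open>same_label T S'\<close> \<open>\<beta> \<in> S'\<close> \<open>\<beta>' \<in> S'\<close>] by simp
    ultimately show False by contradiction
  qed
  then have "S' \<subseteq> S x"
    using induces_connected_subset_closed[OF \<open>induces_connected S'\<close> _ \<open>\<alpha> \<in> S x\<close>]
      \<open>\<alpha> \<in> S x\<close> \<open>S x \<subseteq> S'\<close> by blast
  with \<open>S x \<subseteq> S'\<close> show ?thesis by blast
qed

lemma certificate_part_label_component:
  assumes cert: "certificate V E k T N A L S" and "x \<in> N"
  shows "label_component V E k T (S x)"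
proof -
  have "same_label T (S x)"
    unfolding same_label_def using certificateD(4)[OF cert \<open>x \<in> N\<close>] by simp
  moreover have "S x \<subseteq> colorings V E k"
    using certificateD(2)[OF cert] \<open>x \<in> N\<close> by blast
  ultimately show ?thesis
    unfolding label_component_def
    using certificateD(1,6)[OF cert \<open>x \<in> N\<close>] certificate_part_maximal[OF cert \<open>x \<in> N\<close>] by blast
qed

lemma certificate_imp_is_csg:
  assumes cert: "certificate V E k T N A L S"
  shows "is_csg V E k T N A L"
  unfolding is_csg_def lg_iso_def
proof (intro exI conjI ballI)
  have inj: "S x \<noteq> S y" if "x \<in> N" "y \<in> N" "x \<noteq> y" for x y
    using certificateD(1,3)[OF cert] that by blast
  have "S ` N = csg_nodes V E k T"
  proof
    show "S ` N \<subseteq> csg_nodes V E k T"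
      using certificate_part_label_component[OF cert] unfolding csg_nodes_def by blast
    show "csg_nodes V E k T \<subseteq> S ` N"
    proof
      fix K assume "K \<in> csg_nodes V E k T"
      then have K: "label_component V E k T K" unfolding csg_nodes_def by simp
      obtain \<gamma> where "\<gamma> \<in> K" using label_componentD(1)[OF K] by blast
      then obtain x where "x \<in> N" "\<gamma> \<in> S x"
        using certificateD(2)[OF cert] label_componentD(2)[OF K] by blast
      then have "K = S x"
        using label_component_eqI[OF K certificate_part_label_component[OF cert]] \<open>\<gamma> \<in> K\<close> by blast
      with \<open>x \<in> N\<close> show "K \<in> S ` N" by blast
    qed
  qed
  with inj show "bij_betw S N (csg_nodes V E k T)"
    unfolding bij_betw_def inj_on_def by blast
  fix x assume "x \<in> N"
  obtain \<gamma> where "\<gamma> \<in> S x" using certificateD(1)[OF cert \<open>x \<in> N\<close>] by blast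
  then show "L x = csg_label T (S x)"
    using certificateD(4)[OF cert \<open>x \<in> N\<close>] csg_label_eq[OF certificate_part_label_component[OF cert \<open>x \<in> N\<close>]]
    by simp
  fix y assume "y \<in> N"
  show "A x y \<longleftrightarrow> csg_adj (S x) (S y)"
    using certificateD(5,7)[OF cert \<open>x \<in> N\<close> \<open>y \<in> N\<close>] inj[OF \<open>x \<in> N\<close> \<open>y \<in> N\<close>]
    unfolding csg_adj_def by blast
qed

lemma lab_lab: "T' \<subseteq> T \<Longrightarrow> lab T' (lab T \<gamma>) = lab T' \<gamma>"
  unfolding lab_def by (auto simp: fun_eq_iff)

lemma partition_on_merge:
  assumes "partition_on A P" "X \<in> P" "Y \<in> P"
  shows "partition_on A (insert (X \<union> Y) (P - {X, Y}))"
proof (rule partition_onI)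
  show "\<Union>(insert (X \<union> Y) (P - {X, Y})) = A"
    using partition_onD1[OF assms(1)] assms(2,3) by auto
  show "{} \<notin> insert (X \<union> Y) (P - {X, Y})"
    using partition_onD3[OF assms(1)] assms(2) by auto
  have parts_disjnt: "disjnt p q" if "p \<in> P" "q \<in> P" "p \<noteq> q" for p q
    using partition_onD2[OF assms(1)] that by (rule pairwiseD)
  fix p q assume "p \<in> insert (X \<union> Y) (P - {X, Y})" "q \<in> insert (X \<union> Y) (P - {X, Y})" "p \<noteq> q"
  then consider "p = X \<union> Y" "q \<in> P - {X, Y}" | "q = X \<union> Y" "p \<in> P - {X, Y}"
    | "p \<in> P - {X, Y}" "q \<in> P - {X, Y}"
    by auto
  then show "disjnt p q"
    by cases (use assms(2,3) \<open>p \<noteq> q\<close> in \<open>auto intro: parts_disjnt\<close>)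
qed

lemma certificate_Union_parts_connected:
  assumes cert: "certificate V E k T NH AH L C"
    and "X \<subseteq> NH" "Y \<subseteq> NH" "X \<inter> Y = {}" "x \<in> X" "y \<in> Y" "AH x y"
    and "induces_connected (\<Union>(C ` X))" "induces_connected (\<Union>(C ` Y))"
  shows "induces_connected (\<Union>(C ` (X \<union> Y)))"
proof -
  have "x \<noteq> y" "x \<in> NH" "y \<in> NH" using assms(2-6) by blast+
  then obtain \<gamma> \<gamma>' where "\<gamma> \<in> C x" "\<gamma>' \<in> C y" "recol_adj \<gamma> \<gamma>'"
    using certificateD(7)[OF cert] \<open>AH x y\<close> by blast
  then have "induces_connected (\<Union>(C ` X) \<union> \<Union>(C ` Y))"
    using induces_connected_Un[OF assms(8,9)] \<open>x \<in> X\<close> \<open>y \<in> Y\<close> by blast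
  then show ?thesis by (simp add: image_Un)
qed

lemma merged_adj_iff:
  assumes "X \<in> N" "Y \<in> N"
    and adj: "\<And>P Q. A P Q \<longleftrightarrow> P \<in> N \<and> Q \<in> N \<and> P \<noteq> Q \<and> (\<exists>x\<in>P. \<exists>y\<in>Q. R x y)"
    and N2: "N2 = insert (X \<union> Y) (N - {X, Y})"
    and A2: "A2 = (\<lambda>P Q. P \<in> N2 \<and> Q \<in> N2 \<and> P \<noteq> Q \<and>
            (if P = X \<union> Y then A X Q \<or> A Y Q
             else if Q = X \<union> Y then A P X \<or> A P Y
             else A P Q))"
  shows "A2 P Q \<longleftrightarrow> P \<in> N2 \<and> Q \<in> N2 \<and> P \<noteq> Q \<and> (\<exists>x\<in>P. \<exists>y\<in>Q. R x y)"
proof (cases "P \<in> N2 \<and> Q \<in> N2 \<and> P \<noteq> Q")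
  case True
  have old: "P' \<in> N" "P' \<noteq> X" "P' \<noteq> Y" if "P' \<in> N2" "P' \<noteq> X \<union> Y" for P'
    using that N2 by auto
  consider "P = X \<union> Y" | "Q = X \<union> Y" | "P \<noteq> X \<union> Y" "Q \<noteq> X \<union> Y" by blast
  then show ?thesis
  proof cases
    case 1
    with True have "Q \<in> N" "Q \<noteq> X" "Q \<noteq> Y" using old by auto
    with True 1 show ?thesis by (auto simp: A2 adj assms(1,2))
  next
    case 2
    with True have "P \<in> N" "P \<noteq> X" "P \<noteq> Y" using old by auto
    with True 2 show ?thesis by (auto simp: A2 adj assms(1,2))
  next
    case 3
    with True have "P \<in> N" "Q \<in> N" using old by auto
    with True 3 show ?thesis by (auto simp: A2 adj)
  qed
qed (auto simp: A2)

text \<open>A node of a partially contracted graph is the set of nodes of H it was obtained from; it stands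
  for the union of their parts in a fixed certificate C of H.\<close>
definition contraction_state ::
  "'n set \<Rightarrow> ('n \<Rightarrow> 'n \<Rightarrow> bool) \<Rightarrow> ('n \<Rightarrow> ('v \<Rightarrow> nat) set) \<Rightarrow> 'v set \<Rightarrow>
   'n set set \<times> ('n set \<Rightarrow> 'n set \<Rightarrow> bool) \<times> ('n set \<Rightarrow> ('v \<Rightarrow> nat)) \<Rightarrow> bool" where
  "contraction_state NH AH C T' s \<longleftrightarrow> (case s of (N, A, L') \<Rightarrow>
     partition_on NH N \<and>
     (\<forall>P Q. A P Q \<longleftrightarrow> P \<in> N \<and> Q \<in> N \<and> P \<noteq> Q \<and> (\<exists>x\<in>P. \<exists>y\<in>Q. AH x y)) \<and>
     (\<forall>P\<in>N. \<forall>\<gamma>\<in>\<Union>(C ` P). lab T' \<gamma> = L' P) \<and>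
     (\<forall>P\<in>N. induces_connected (\<Union>(C ` P))))"

lemma contraction_state_init:
  assumes cert: "certificate V E k T NH AH L C" and "T' \<subseteq> T"
  shows "contraction_state NH AH C T'
    ((\<lambda>x. {x}) ` NH,
     (\<lambda>P Q. \<exists>x\<in>NH. \<exists>y\<in>NH. P = {x} \<and> Q = {y} \<and> AH x y),
     (\<lambda>P. lab T' (L (THE x. P = {x}))))"
  unfolding contraction_state_def prod.case
proof (intro conjI allI ballI)
  show "partition_on NH ((\<lambda>x. {x}) ` NH)" by (rule partition_on_singletons)
  fix P Q
  show "(\<exists>x\<in>NH. \<exists>y\<in>NH. P = {x} \<and> Q = {y} \<and> AH x y) \<longleftrightarrow>
    P \<in> (\<lambda>x. {x}) ` NH \<and> Q \<in> (\<lambda>x. {x}) ` NH \<and> P \<noteq> Q \<and> (\<exists>x\<in>P. \<exists>y\<in>Q. AH x y)"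
    using certificateD(5)[OF cert] by blast
next
  fix P assume "P \<in> (\<lambda>x. {x}) ` NH"
  then obtain x where "x \<in> NH" "P = {x}" by blast
  then show "induces_connected (\<Union>(C ` P))" using certificateD(6)[OF cert] by simp
  fix \<gamma> assume "\<gamma> \<in> \<Union>(C ` P)"
  then have "lab T \<gamma> = L x" using certificateD(4)[OF cert] \<open>x \<in> NH\<close> \<open>P = {x}\<close> by simp
  then show "lab T' \<gamma> = lab T' (L (THE x. P = {x}))"
    using lab_lab[OF \<open>T' \<subseteq> T\<close>, of \<gamma>] \<open>P = {x}\<close> by simp
qed

lemma contract_step_contraction_state:
  assumes cert: "certificate V E k T NH AH L C"
    and "contract_step s s'" and "contraction_state NH AH C T' s"
  shows "contraction_state NH AH C T' s'"
  using assms(2)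
proof cases
  case (1 X N Y A L0 N2 A2 L2)
  from assms(3) have part: "partition_on NH N"
    and adj: "\<And>P Q. A P Q \<longleftrightarrow> P \<in> N \<and> Q \<in> N \<and> P \<noteq> Q \<and> (\<exists>x\<in>P. \<exists>y\<in>Q. AH x y)"
    and labels: "\<forall>P\<in>N. \<forall>\<gamma>\<in>\<Union>(C ` P). lab T' \<gamma> = L0 P"
    and conn: "\<forall>P\<in>N. induces_connected (\<Union>(C ` P))"
    unfolding \<open>s = (N, A, L0)\<close> contraction_state_def by simp_all
  have old: "P \<in> N" "P \<noteq> X" "P \<noteq> Y" if "P \<in> N2" "P \<noteq> X \<union> Y" for P
    using that \<open>N2 = insert (X \<union> Y) (N - {X, Y})\<close> by auto
  have "partition_on NH N2"
    unfolding \<open>N2 = _\<close> using partition_on_merge[OF part \<open>X \<in> N\<close> \<open>Y \<in> N\<close>] .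
  moreover have "A2 P Q \<longleftrightarrow> P \<in> N2 \<and> Q \<in> N2 \<and> P \<noteq> Q \<and> (\<exists>x\<in>P. \<exists>y\<in>Q. AH x y)" for P Q
    by (rule merged_adj_iff[OF \<open>X \<in> N\<close> \<open>Y \<in> N\<close> adj \<open>N2 = _\<close> \<open>A2 = _\<close>])
  moreover have "\<forall>P\<in>N2. \<forall>\<gamma>\<in>\<Union>(C ` P). lab T' \<gamma> = L2 P"
    using labels old \<open>X \<in> N\<close> \<open>Y \<in> N\<close> \<open>L0 X = L0 Y\<close>
    unfolding \<open>L2 = _\<close> by (metis UN_Un Un_iff fun_upd_other fun_upd_same)
  moreover have "\<forall>P\<in>N2. induces_connected (\<Union>(C ` P))"
  proof
    fix P assume "P \<in> N2"
    show "induces_connected (\<Union>(C ` P))"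
    proof (cases "P = X \<union> Y")
      case True
      obtain x y where "x \<in> X" "y \<in> Y" "AH x y" using adj \<open>A X Y\<close> by blast
      moreover have "X \<inter> Y = {}"
        using partition_onD2[OF part] \<open>X \<in> N\<close> \<open>Y \<in> N\<close> \<open>X \<noteq> Y\<close> by (rule disjointD)
      moreover have "X \<subseteq> NH" "Y \<subseteq> NH"
        using partition_onD1[OF part] \<open>X \<in> N\<close> \<open>Y \<in> N\<close> by auto
      ultimately show ?thesis
        using certificate_Union_parts_connected[OF cert] conn \<open>X \<in> N\<close> \<open>Y \<in> N\<close> True by blast
    qed (use conn old \<open>P \<in> N2\<close> in blast)
  qed
  ultimately show ?thesis
    unfolding \<open>s' = (N2, A2, L2)\<close> contraction_state_def by simp
qed

lemma contract_steps_contraction_state: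
  assumes "certificate V E k T NH AH L C"
  shows "contract_step\<^sup>*\<^sup>* s s' \<Longrightarrow> contraction_state NH AH C T' s \<Longrightarrow> contraction_state NH AH C T' s'"
  by (induction rule: rtranclp_induct) (use contract_step_contraction_state[OF assms] in blast)+

lemma certificate_Union_parts_disjoint:
  assumes cert: "certificate V E k T NH AH L C" and "X \<subseteq> NH" "Y \<subseteq> NH" "X \<inter> Y = {}"
  shows "\<Union>(C ` X) \<inter> \<Union>(C ` Y) = {}"
  using certificateD(3)[OF cert] assms(2-4) by blast

lemma certificate_Union_parts_adj_iff:
  assumes cert: "certificate V E k T NH AH L C" and "X \<subseteq> NH" "Y \<subseteq> NH" "X \<inter> Y = {}"
  shows "(\<exists>x\<in>X. \<exists>y\<in>Y. AH x y) \<longleftrightarrow> (\<exists>\<gamma>\<in>\<Union>(C ` X). \<exists>\<gamma>'\<in>\<Union>(C ` Y). recol_adj \<gamma> \<gamma>')"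
proof -
  have "AH x y \<longleftrightarrow> (\<exists>\<gamma>\<in>C x. \<exists>\<gamma>'\<in>C y. recol_adj \<gamma> \<gamma>')" if "x \<in> X" "y \<in> Y" for x y
  proof -
    have "x \<noteq> y" using that assms(4) by blast
    with that assms(2,3) show ?thesis using certificateD(7)[OF cert] by blast
  qed
  then show ?thesis by blast
qed

lemma contraction_state_certificate:
  assumes cert: "certificate V E k T NH AH L C"
    and "contraction_state NH AH C T' (N, A, L')"
    and "\<not> (\<exists>X\<in>N. \<exists>Y\<in>N. A X Y \<and> L' X = L' Y)"
  shows "certificate V E k T' N A L' (\<lambda>P. \<Union>(C ` P))"
proof -
  from assms(2) have part: "partition_on NH N"
    and adj: "\<And>P Q. A P Q \<longleftrightarrow> P \<in> N \<and> Q \<in> N \<and> P \<noteq> Q \<and> (\<exists>x\<in>P. \<exists>y\<in>Q. AH x y)"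
    and labels: "\<forall>P\<in>N. \<forall>\<gamma>\<in>\<Union>(C ` P). lab T' \<gamma> = L' P"
    and conn: "\<forall>P\<in>N. induces_connected (\<Union>(C ` P))"
    unfolding contraction_state_def by simp_all
  have "\<Union>N = NH" using partition_onD1[OF part] by simp
  then have sub: "P \<subseteq> NH" if "P \<in> N" for P
    using Union_upper[OF that] by simp
  have disj: "P \<inter> Q = {}" if "P \<in> N" "Q \<in> N" "P \<noteq> Q" for P Q
    using partition_onD2[OF part] that by (rule disjointD)
  show ?thesis
    unfolding certificate_def
  proof (intro conjI)
    show "\<forall>P\<in>N. \<Union>(C ` P) \<noteq> {}"
    proof
      fix P assume "P \<in> N"
      then obtain x where "x \<in> P" using partition_onD3[OF part] by fastforce
      with sub[OF \<open>P \<in> N\<close>] show "\<Union>(C ` P) \<noteq> {}" using certificateD(1)[OF cert] by blast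
    qed
    have "(\<Union>P\<in>N. \<Union>(C ` P)) = (\<Union>x\<in>\<Union>N. C x)" by blast
    then show "(\<Union>P\<in>N. \<Union>(C ` P)) = colorings V E k"
      using certificateD(2)[OF cert] \<open>\<Union>N = NH\<close> by simp
    show "\<forall>P\<in>N. \<forall>Q\<in>N. P \<noteq> Q \<longrightarrow> \<Union>(C ` P) \<inter> \<Union>(C ` Q) = {}"
      using certificate_Union_parts_disjoint[OF cert sub sub disj] by blast
    show "\<forall>P\<in>N. \<forall>\<gamma>\<in>\<Union>(C ` P). lab T' \<gamma> = L' P" by (fact labels)
    show "\<forall>P\<in>N. \<forall>Q\<in>N. A P Q \<longrightarrow> L' P \<noteq> L' Q" using assms(3) by auto
    show "\<forall>P\<in>N. induces_connected (\<Union>(C ` P))" by (fact conn)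
    show "\<forall>P\<in>N. \<forall>Q\<in>N. P \<noteq> Q \<longrightarrow>
      A P Q \<longleftrightarrow> (\<exists>\<gamma>\<in>\<Union>(C ` P). \<exists>\<gamma>'\<in>\<Union>(C ` Q). recol_adj \<gamma> \<gamma>')"
      using adj certificate_Union_parts_adj_iff[OF cert sub sub disj] by simp
  qed
qed

theorem lemma2:
  fixes V :: "'v set" and E :: "'v \<Rightarrow> 'v \<Rightarrow> bool" and k :: nat
    and T :: "'v set" and v :: 'v
    and NH :: "'n set" and AH :: "'n \<Rightarrow> 'n \<Rightarrow> bool" and L :: "'n \<Rightarrow> ('v \<Rightarrow> nat)"
    and N' :: "'n set set" and A' :: "'n set \<Rightarrow> 'n set \<Rightarrow> bool"
    and L' :: "'n set \<Rightarrow> ('v \<Rightarrow> nat)"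
  assumes "simple_graph V E" and "k \<ge> 1" and "T \<subseteq> V" and "v \<in> T"
    and "is_csg V E k T NH AH L"
    and "contract_step\<^sup>*\<^sup>*
           ((\<lambda>x. {x}) ` NH,
            (\<lambda>P Q. \<exists>x\<in>NH. \<exists>y\<in>NH. P = {x} \<and> Q = {y} \<and> AH x y),
            (\<lambda>P. lab (T - {v}) (L (THE x. P = {x}))))
           (N', A', L')"
    and "\<not> (\<exists>X\<in>N'. \<exists>Y\<in>N'. A' X Y \<and> L' X = L' Y)"
  shows "is_csg V E k (T - {v}) N' A' L'
    \<and> (\<forall>S. certificate V E k T NH AH L S \<longrightarrow>
          (\<exists>S'. certificate V E k (T - {v}) N' A' L' S' \<and>
             (\<forall>\<gamma>\<in>colorings V E k. \<forall>x\<in>NH. \<forall>X\<in>N'.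
                 \<gamma> \<in> S x \<longrightarrow> x \<in> X \<longrightarrow> \<gamma> \<in> S' X)))"
proof -
  have contracted: "certificate V E k (T - {v}) N' A' L' (\<lambda>X. \<Union>(S ` X))"
    if cert: "certificate V E k T NH AH L S" for S
  proof -
    have "contraction_state NH AH S (T - {v}) (N', A', L')"
      using contract_steps_contraction_state[OF cert assms(6)]
        contraction_state_init[OF cert Diff_subset] by blast
    then show ?thesis using contraction_state_certificate[OF cert _ assms(7)] by blast
  qed
  obtain S where "certificate V E k T NH AH L S"
    using is_csg_imp_certificate[OF assms(5)] by blast
  then have "is_csg V E k (T - {v}) N' A' L'"
    by (rule certificate_imp_is_csg[OF contracted])
  moreover have "\<exists>S'. certificate V E k (T - {v}) N' A' L' S' \<and>
      (\<forall>\<gamma>\<in>colorings V E k. \<forall>x\<in>NH. \<forall>X\<in>N'. \<gamma> \<in> S x \<longrightarrow> x \<in> X \<longrightarrow> \<gamma> \<in> S' X)"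
    if "certificate V E k T NH AH L S" for S
    using contracted[OF that] by (intro exI[of _ "\<lambda>X. \<Union>(S ` X)"]) blast
  ultimately show ?thesis by blast
qed

end
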